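(* Let $S_0,S_1,S_2$ be pair-partitions of $[2k]$. Then, as functions on Young diagrams, $N^{(2)}_{S_0,S_1,S_2}=2^{|\mathcal{L}(S_0,S_1)|}\,N^{(1)}_{S_0,S_1,S_2}$.
   Context: Pair-partitions of $[2k]$ are sets of disjoint two-element subsets with union $[2k]$, identified with fixed-point-free involutions. $\mathcal{L}(S_0,S_1)$ is the bipartite graph with a black vertex per pair of $S_0$, a white vertex per pair of $S_1$, and an edge for each $i\in[2k]$ joining the pairs containing $i$; it is a union of loops and $|\mathcal{L}(S_0,S_1)|$ is the number of loops. $N^{(1)}_{S_0,S_1,S_2}(\lambda)$ is the number of functions $f$ from $[2k]$ to the boxes of $\lambda$ such that for all $l$: $f(l)=f(S_0(l))$; $f(l)$ and $f(S_1(l))$ are in the same column; $f(l)$ and $f(S_2(l))$ are in the same row. $2\lambda=(2\lambda_1,2\lambda_2,\dots)$; two boxes of $2\lambda$ are neighbors if they are in the same row and in columns $2i+1$ and $2i+2$ for some $i\ge0$. $N^{(2)}_{S_0,S_1,S_2}(\lambda)$ is the number of functions $f$ from $[2k]$ to the boxes of $2\lambda$ such that for all $l$: $f(l)$ and $f(S_0(l))$ are neighbors; $f(l)$ and $f(S_0\circ S_1(l))$ are in the same column; $f(l)$ and $f(S_2(l))$ are in the same row. *)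

theory Defs
  imports Main "HOL-Library.FuncSet"
begin

text \<open>Ground set [2k] = {1..2k}. A pair-partition is identified with a
 fixed-point-free involution of [2k].\<close>

definition pair_partition :: "nat \<Rightarrow> (nat \<Rightarrow> nat) \<Rightarrow> bool" where
  "pair_partition k S \<longleftrightarrow>
     (\<forall>i\<in>{1..2*k}. S i \<in> {1..2*k} \<and> S (S i) = i \<and> S i \<noteq> i)"

definition pairs :: "nat \<Rightarrow> (nat \<Rightarrow> nat) \<Rightarrow> nat set set" where
  "pairs k S = {{i, S i} | i. i \<in> {1..2*k}}"

text \<open>The bipartite graph L(S0,S1): black vertices Inl p (p a pair of S0),
 white vertices Inr q (q a pair of S1); for each i an edge joining the pairs
 containing i, i.e. Inl p and Inr q are adjacent iff p and q share an element.\<close>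
definition loop_vertices :: "nat \<Rightarrow> (nat \<Rightarrow> nat) \<Rightarrow> (nat \<Rightarrow> nat) \<Rightarrow> (nat set + nat set) set" where
  "loop_vertices k S0 S1 = Inl ` pairs k S0 \<union> Inr ` pairs k S1"

definition loop_adj :: "nat \<Rightarrow> (nat \<Rightarrow> nat) \<Rightarrow> (nat \<Rightarrow> nat) \<Rightarrow> ((nat set + nat set) \<times> (nat set + nat set)) set" where
  "loop_adj k S0 S1 =
     {(Inl p, Inr q) | p q. p \<in> pairs k S0 \<and> q \<in> pairs k S1 \<and>
        (\<exists>i\<in>{1..2*k}. i \<in> p \<and> i \<in> q)} \<union>
     {(Inr q, Inl p) | p q. p \<in> pairs k S0 \<and> q \<in> pairs k S1 \<and>
        (\<exists>i\<in>{1..2*k}. i \<in> p \<and> i \<in> q)}"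

definition num_loops :: "nat \<Rightarrow> (nat \<Rightarrow> nat) \<Rightarrow> (nat \<Rightarrow> nat) \<Rightarrow> nat" where
  "num_loops k S0 S1 =
     card (loop_vertices k S0 S1 // ((loop_adj k S0 S1)\<^sup>* \<inter>
            (loop_vertices k S0 S1 \<times> loop_vertices k S0 S1)))"

text \<open>Young diagrams: weakly decreasing lists of positive row lengths.
 Boxes are (row, column), 0-indexed.\<close>
definition young :: "nat list \<Rightarrow> bool" where
  "young lam \<longleftrightarrow> sorted_wrt (\<ge>) lam \<and> (\<forall>x\<in>set lam. 0 < x)"

definition boxes :: "nat list \<Rightarrow> (nat \<times> nat) set" where
  "boxes lam = {(r, c). r < length lam \<and> c < lam ! r}"

definition double_diagram :: "nat list \<Rightarrow> nat list" where
  "double_diagram lam = map (\<lambda>x. 2 * x) lam"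

text \<open>Neighbors: same row, columns 2i+1 and 2i+2 (1-indexed), i.e. 2i and 2i+1
 0-indexed.\<close>
definition neighbors :: "nat \<times> nat \<Rightarrow> nat \<times> nat \<Rightarrow> bool" where
  "neighbors a b \<longleftrightarrow> fst a = fst b \<and>
     (\<exists>i. (snd a = 2*i \<and> snd b = 2*i+1) \<or> (snd a = 2*i+1 \<and> snd b = 2*i))"

definition N1 :: "nat \<Rightarrow> (nat \<Rightarrow> nat) \<Rightarrow> (nat \<Rightarrow> nat) \<Rightarrow> (nat \<Rightarrow> nat) \<Rightarrow> nat list \<Rightarrow> nat" where
  "N1 k S0 S1 S2 lam = card {f \<in> {1..2*k} \<rightarrow>\<^sub>E boxes lam.
      \<forall>l\<in>{1..2*k}. f l = f (S0 l) \<and> snd (f l) = snd (f (S1 l))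
                    \<and> fst (f l) = fst (f (S2 l))}"

definition N2 :: "nat \<Rightarrow> (nat \<Rightarrow> nat) \<Rightarrow> (nat \<Rightarrow> nat) \<Rightarrow> (nat \<Rightarrow> nat) \<Rightarrow> nat list \<Rightarrow> nat" where
  "N2 k S0 S1 S2 lam = card {f \<in> {1..2*k} \<rightarrow>\<^sub>E boxes (double_diagram lam).
      \<forall>l\<in>{1..2*k}. neighbors (f l) (f (S0 l)) \<and> snd (f l) = snd (f (S0 (S1 l)))
                    \<and> fst (f l) = fst (f (S2 l))}"

end

theory Submission
  imports Defs "HOL-Combinatorics.Orbits"
begin

text \<open>A map counted by \<open>N2\<close> sends \<open>l\<close> to a box \<open>(r, 2c + \<beta>)\<close> of \<open>2\<lambda>\<close>; the boxes \<open>(r, c)\<close>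
  form a map counted by \<open>N1\<close>, and the bits \<open>\<beta>\<close> form a function \<open>b\<close> on \<open>[2k]\<close> with
  \<open>b (S0 l) \<noteq> b l \<noteq> b (S1 l)\<close>, i.e. a proper 2-colouring of the graph joining each \<open>l\<close> to
  \<open>S0 l\<close> and \<open>S1 l\<close>, and the two conditions are independent. The components of this graph
  are the loops of \<open>\<L>(S0, S1)\<close>. Each component is bipartite: it is an orbit of \<open>S1 \<circ> S0\<close>
  together with its image under \<open>S0\<close>, which is a different orbit. Hence there are exactly
  \<open>2 ^ |\<L>(S0, S1)|\<close> colourings.\<close>

lemma card_image_eq_if_same_kernel:
  assumes "\<And>x y. x \<in> A \<Longrightarrow> y \<in> A \<Longrightarrow> f x = f y \<longleftrightarrow> g x = g y"
  shows "card (f ` A) = card (g ` A)"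
proof -
  define h where "h = (\<lambda>z. g (inv_into A f z))"
  have hf: "h (f x) = g x" if "x \<in> A" for x
    using assms[of "inv_into A f (f x)" x] that inv_into_into[of "f x" f A] f_inv_into_f[of "f x" f A]
    unfolding h_def by auto
  have "inj_on h (f ` A)"
    by (rule inj_onI) (auto simp: hf assms)
  moreover have "h ` f ` A = g ` A"
    using hf by (auto simp: image_image)
  ultimately show ?thesis
    by (metis card_image)
qed

lemma equiv_Restr_rtrancl:
  assumes "sym G"
  shows "equiv A (Restr (G\<^sup>*) A)"
  using sym_rtrancl[OF assms] unfolding equiv_def refl_on_def sym_def trans_def
  by (auto intro: rtrancl_trans)

lemma proper_two_colourings_differ_on_components:
  fixes b c :: "'a \<Rightarrow> bool"
  assumes "(x, y) \<in> G\<^sup>*" and "\<forall>(u, v)\<in>G. b u \<noteq> b v" and "\<forall>(u, v)\<in>G. c u \<noteq> c v"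
  shows "(b x \<noteq> c x) = (b y \<noteq> c y)"
  using assms(1)
proof induction
  case (step y z)
  then have "b y \<noteq> b z" and "c y \<noteq> c z"
    using assms(2,3) by auto
  with step.IH show ?case
    by argo
qed simp

lemma card_proper_two_colourings:
  fixes c :: "'a \<Rightarrow> bool"
  assumes "finite A" and "sym G" and "G \<subseteq> A \<times> A" and c: "\<forall>(x, y)\<in>G. c x \<noteq> c y"
  shows "card {b \<in> A \<rightarrow>\<^sub>E (UNIV :: bool set). \<forall>(x, y)\<in>G. b x \<noteq> b y}
           = 2 ^ card (A // Restr (G\<^sup>*) A)"
proof -
  define R where "R = Restr (G\<^sup>*) A"
  define P where "P = {b \<in> A \<rightarrow>\<^sub>E (UNIV :: bool set). \<forall>(x, y)\<in>G. b x \<noteq> b y}"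
  define \<Phi> where "\<Phi> b = (\<lambda>C\<in>A // R. \<exists>x\<in>C. b x \<noteq> c x)" for b :: "'a \<Rightarrow> bool"
  define \<Psi> where "\<Psi> D = (\<lambda>x\<in>A. D (R `` {x}) \<noteq> c x)" for D :: "'a set \<Rightarrow> bool"
  have R: "equiv A R"
    unfolding R_def using assms(2) by (rule equiv_Restr_rtrancl)
  have \<Phi>_class: "\<Phi> b (R `` {x}) = (b x \<noteq> c x)" if "b \<in> P" "x \<in> A" for b x
  proof -
    have same: "(b y \<noteq> c y) = (b x \<noteq> c x)" if "y \<in> R `` {x}" for y
    proof -
      have "(x, y) \<in> G\<^sup>*" and "\<forall>(u, v)\<in>G. b u \<noteq> b v"
        using that \<open>b \<in> P\<close> unfolding P_def R_def by auto
      from proper_two_colourings_differ_on_components[OF this c] show ?thesis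
        by simp
    qed
    have "\<Phi> b (R `` {x}) = (\<exists>y\<in>R `` {x}. b y \<noteq> c y)"
      using quotientI[OF \<open>x \<in> A\<close>] unfolding \<Phi>_def by simp
    also have "\<dots> = (b x \<noteq> c x)"
      using same equiv_class_self[OF R \<open>x \<in> A\<close>] by blast
    finally show ?thesis .
  qed
  have \<Psi>_class: "\<Psi> D y = (D C \<noteq> c y)" if "C \<in> A // R" "y \<in> C" for D C y
  proof -
    obtain a where "a \<in> A" and C: "C = R `` {a}"
      using \<open>C \<in> A // R\<close> by (rule quotientE)
    then have "R `` {y} = C" and "y \<in> A"
      using \<open>y \<in> C\<close> equiv_class_eq[OF R, of a y] equiv_type[OF R] by auto
    then show ?thesis
      unfolding \<Psi>_def by simp
  qed
  have "bij_betw \<Phi> P ((A // R) \<rightarrow>\<^sub>E (UNIV :: bool set))"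
  proof (rule bij_betw_byWitness[where f' = \<Psi>])
    show "\<forall>b\<in>P. \<Psi> (\<Phi> b) = b"
      using \<Phi>_class unfolding \<Psi>_def by (auto simp: P_def fun_eq_iff PiE_def extensional_def)
    show "\<forall>D\<in>(A // R) \<rightarrow>\<^sub>E (UNIV :: bool set). \<Phi> (\<Psi> D) = D"
    proof (intro ballI ext)
      fix D C assume D: "D \<in> (A // R) \<rightarrow>\<^sub>E (UNIV :: bool set)"
      show "\<Phi> (\<Psi> D) C = D C"
      proof (cases "C \<in> A // R")
        case True
        have "C \<noteq> {}"
          using R True by (rule in_quotient_imp_non_empty)
        then show ?thesis
          using True \<Psi>_class[OF True] unfolding \<Phi>_def by auto
      qed (use D \<Phi>_def in auto)
    qed
    show "\<Phi> ` P \<subseteq> (A // R) \<rightarrow>\<^sub>E (UNIV :: bool set)"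
      unfolding \<Phi>_def by auto
    show "\<Psi> ` ((A // R) \<rightarrow>\<^sub>E (UNIV :: bool set)) \<subseteq> P"
    proof
      fix b assume "b \<in> \<Psi> ` ((A // R) \<rightarrow>\<^sub>E (UNIV :: bool set))"
      then obtain D where b: "b = \<Psi> D"
        by blast
      have "\<Psi> D x \<noteq> \<Psi> D y" if "(x, y) \<in> G" for x y
      proof -
        have "x \<in> A" "(x, y) \<in> R" "c x \<noteq> c y"
          using that assms(3) c unfolding R_def by auto
        moreover have "x \<in> R `` {x}" "y \<in> R `` {x}"
          using equiv_class_self[OF R \<open>x \<in> A\<close>] \<open>(x, y) \<in> R\<close> by auto
        ultimately show ?thesis
          using \<Psi>_class[OF quotientI[OF \<open>x \<in> A\<close>]] by auto
      qed
      moreover have "\<Psi> D \<in> A \<rightarrow>\<^sub>E UNIV"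
        unfolding \<Psi>_def by simp
      ultimately show "b \<in> P"
        unfolding P_def b by auto
    qed
  qed
  then have "card P = card ((A // R) \<rightarrow>\<^sub>E (UNIV :: bool set))"
    by (rule bij_betw_same_card)
  also have "\<dots> = 2 ^ card (A // R)"
    using finite_quotient[OF assms(1)] R by (simp add: card_PiE equiv_type)
  finally show ?thesis
    unfolding P_def R_def .
qed

lemma card_PiE_filter_product:
  assumes h: "bij_betw h (A \<times> B) C"
    and decomp: "\<And>g b. g \<in> I \<rightarrow>\<^sub>E A \<Longrightarrow> b \<in> I \<rightarrow>\<^sub>E B \<Longrightarrow>
                  P (\<lambda>l\<in>I. h (g l, b l)) \<longleftrightarrow> Q g \<and> R b"
  shows "card {f \<in> I \<rightarrow>\<^sub>E C. P f} = card {g \<in> I \<rightarrow>\<^sub>E A. Q g} * card {b \<in> I \<rightarrow>\<^sub>E B. R b}"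
proof -
  define H where "H = (\<lambda>(g, b). \<lambda>l\<in>I. h (g l, b l))"
  define h' where "h' = inv_into (A \<times> B) h"
  have h'_in: "h' c \<in> A \<times> B" if "c \<in> C" for c
    using bij_betwE[OF bij_betw_inv_into[OF h]] that unfolding h'_def by blast
  have h_h': "h (h' c) = c" if "c \<in> C" for c
    using bij_betw_inv_into_right[OF h that] unfolding h'_def .
  have inj: "inj_on H ((I \<rightarrow>\<^sub>E A) \<times> (I \<rightarrow>\<^sub>E B))"
  proof (rule inj_onI, clarify)
    fix g b g' b' assume gb: "g \<in> I \<rightarrow>\<^sub>E A" "b \<in> I \<rightarrow>\<^sub>E B" "g' \<in> I \<rightarrow>\<^sub>E A" "b' \<in> I \<rightarrow>\<^sub>E B"
      and eq: "H (g, b) = H (g', b')"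
    have "(g l, b l) = (g' l, b' l)" if "l \<in> I" for l
    proof (rule inj_onD[OF bij_betw_imp_inj_on[OF h]])
      show "h (g l, b l) = h (g' l, b' l)"
        using fun_cong[OF eq, of l] that unfolding H_def by simp
    qed (use gb that in \<open>auto intro: PiE_mem\<close>)
    with gb show "g = g' \<and> b = b'"
      by (metis PiE_ext prod.inject)
  qed
  have image: "H ` ({g \<in> I \<rightarrow>\<^sub>E A. Q g} \<times> {b \<in> I \<rightarrow>\<^sub>E B. R b}) = {f \<in> I \<rightarrow>\<^sub>E C. P f}"
  proof (intro equalityI subsetI)
    fix f assume "f \<in> H ` ({g \<in> I \<rightarrow>\<^sub>E A. Q g} \<times> {b \<in> I \<rightarrow>\<^sub>E B. R b})"
    then obtain g b where gb: "g \<in> I \<rightarrow>\<^sub>E A" "b \<in> I \<rightarrow>\<^sub>E B" "Q g" "R b"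
      and f: "f = H (g, b)"
      by auto
    have "f \<in> I \<rightarrow>\<^sub>E C"
      unfolding f H_def using gb(1,2) bij_betwE[OF h] by (auto intro: PiE_mem)
    with gb f decomp[OF gb(1,2)] show "f \<in> {f \<in> I \<rightarrow>\<^sub>E C. P f}"
      unfolding H_def by simp
  next
    fix f assume f: "f \<in> {f \<in> I \<rightarrow>\<^sub>E C. P f}"
    define g where "g = (\<lambda>l\<in>I. fst (h' (f l)))"
    define b where "b = (\<lambda>l\<in>I. snd (h' (f l)))"
    have gb: "g \<in> I \<rightarrow>\<^sub>E A" "b \<in> I \<rightarrow>\<^sub>E B"
      using f h'_in unfolding g_def b_def by (auto simp: mem_Times_iff)
    have Hgb: "H (g, b) = f"
      using f h_h' unfolding H_def g_def b_def by (auto simp: fun_eq_iff PiE_def extensional_def)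
    then have "Q g \<and> R b"
      using f decomp[OF gb] unfolding H_def by simp
    with gb Hgb show "f \<in> H ` ({g \<in> I \<rightarrow>\<^sub>E A. Q g} \<times> {b \<in> I \<rightarrow>\<^sub>E B. R b})"
      by (intro image_eqI[where x = "(g, b)"]) auto
  qed
  have "inj_on H ({g \<in> I \<rightarrow>\<^sub>E A. Q g} \<times> {b \<in> I \<rightarrow>\<^sub>E B. R b})"
    using inj by (rule inj_on_subset) auto
  from card_image[OF this] show ?thesis
    unfolding image by (simp add: card_cartesian_product)
qed

lemma orbit_eq_if_common_element:
  assumes "permutation f" and "z \<in> orbit f x" and "z \<in> orbit f y"
  shows "orbit f x = orbit f y"
  using assms cyclic_on_orbit'[OF assms(1)] orbit_cyclic_eq3 by metis

lemma pair_partitionD: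
  assumes "pair_partition k S" and "i \<in> {1..2*k}"
  shows "S i \<in> {1..2*k}" and "S (S i) = i" and "S i \<noteq> i"
  using assms unfolding pair_partition_def by blast+

lemma mem_pairsD:
  assumes "pair_partition k S" and "p \<in> pairs k S" and "i \<in> p"
  shows "i \<in> {1..2*k}" and "p = {i, S i}"
proof -
  obtain j where j: "j \<in> {1..2*k}" "p = {j, S j}"
    using assms(2) unfolding pairs_def by auto
  then show "i \<in> {1..2*k}" and "p = {i, S i}"
    using assms(3) pair_partitionD[OF assms(1) j(1)] by auto
qed

lemma pair_in_pairs: "i \<in> {1..2*k} \<Longrightarrow> {i, S i} \<in> pairs k S"
  unfolding pairs_def by blast

definition join_box :: "(nat \<times> nat) \<times> bool \<Rightarrow> nat \<times> nat" where
  "join_box = (\<lambda>((r, c), \<beta>). (r, 2 * c + of_bool \<beta>))"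

lemma bij_join_box: "bij_betw join_box (boxes lam \<times> UNIV) (boxes (double_diagram lam))"
  by (rule bij_betw_byWitness[where f' = "\<lambda>(r, c). ((r, c div 2), odd c)"])
    (auto simp: join_box_def boxes_def double_diagram_def)

lemma neighbors_join_box:
  "neighbors (join_box (a, \<beta>)) (join_box (a', \<beta>')) \<longleftrightarrow> a = a' \<and> \<beta> \<noteq> \<beta>'"
  by (cases a; cases a') (auto simp: join_box_def neighbors_def; presburger)

lemma snd_join_box_eq_iff:
  "snd (join_box (a, \<beta>)) = snd (join_box (a', \<beta>')) \<longleftrightarrow> snd a = snd a' \<and> \<beta> = \<beta>'"
  by (cases a; cases a') (auto simp: join_box_def; presburger)

lemma fst_join_box [simp]: "fst (join_box (a, \<beta>)) = fst a"
  by (cases a) (simp add: join_box_def)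

locale pair_partitions =
  fixes k :: nat and S0 S1 :: "nat \<Rightarrow> nat"
  assumes S0: "pair_partition k S0" and S1: "pair_partition k S1"
begin

definition X :: "nat set" where
  "X = {1..2*k}"

lemma finite_X: "finite X"
  by (simp add: X_def)

lemmas S0_in = pair_partitionD(1)[OF S0, folded X_def]
  and S0_S0 = pair_partitionD(2)[OF S0, folded X_def]
  and S0_neq = pair_partitionD(3)[OF S0, folded X_def]
lemmas S1_in = pair_partitionD(1)[OF S1, folded X_def]
  and S1_S1 = pair_partitionD(2)[OF S1, folded X_def]
  and S1_neq = pair_partitionD(3)[OF S1, folded X_def]

text \<open>\<open>S1 \<circ> S0\<close> on \<open>[2k]\<close>, extended by the identity so that it is a permutation.\<close>

definition rot :: "nat \<Rightarrow> nat" where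
  "rot x = (if x \<in> X then S1 (S0 x) else x)"

lemma rot_permutes: "rot permutes X"
proof (rule bij_imp_permutes)
  show "bij_betw rot X X"
    by (rule bij_betw_byWitness[where f' = "\<lambda>x. S0 (S1 x)"])
      (auto simp: rot_def S0_in S1_in S0_S0 S1_S1)
qed (simp add: rot_def)

lemma permutation_rot: "permutation rot"
  using permutes_imp_permutation[OF finite_X rot_permutes] .

lemma funpow_rot_in: "x \<in> X \<Longrightarrow> (rot ^^ n) x \<in> X"
  using permutes_in_funpow_image[OF rot_permutes] .

lemma funpow_rot_S0_funpow_rot: "x \<in> X \<Longrightarrow> (rot ^^ n) (S0 ((rot ^^ n) x)) = S0 x"
proof (induction n)
  case (Suc n)
  have "(rot ^^ Suc n) (S0 ((rot ^^ Suc n) x)) = (rot ^^ n) (rot (S0 (rot ((rot ^^ n) x))))"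
    by (metis funpow_Suc_right funpow.simps(2) comp_apply)
  also have "\<dots> = (rot ^^ n) (S0 ((rot ^^ n) x))"
    using funpow_rot_in[OF Suc.prems, of n] by (simp add: rot_def S0_in S1_in S0_S0 S1_S1)
  finally show ?case
    using Suc by simp
qed simp

lemma S0_notin_orbit_rot:
  assumes "x \<in> X"
  shows "S0 x \<notin> orbit rot x"
proof
  assume "S0 x \<in> orbit rot x"
  then obtain j where j: "(rot ^^ j) x = S0 x"
    by (auto simp: orbit_altdef_permutation[OF permutation_rot])
  txt \<open>With \<open>y = (rot ^^ (j div 2)) x\<close>, the identity \<open>rot\<^sup>n \<circ> S0 \<circ> rot\<^sup>n = S0\<close> turns this into
    \<open>S0 y = y\<close> or \<open>S0 y = rot y = S1 (S0 y)\<close>, a fixed point of \<open>S0\<close> or of \<open>S1\<close>.\<close>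
  define y where "y = (rot ^^ (j div 2)) x"
  have y: "y \<in> X"
    using funpow_rot_in[OF assms] by (simp add: y_def)
  have "(rot ^^ (j div 2)) (S0 y) = S0 x"
    using funpow_rot_S0_funpow_rot[OF assms] by (simp add: y_def)
  also have "\<dots> = (rot ^^ (j div 2)) ((rot ^^ (j mod 2)) y)"
  proof -
    have "j = j div 2 + (j mod 2 + j div 2)"
      by presburger
    then show ?thesis
      unfolding j[symmetric] y_def by (metis funpow_add comp_apply)
  qed
  finally have "S0 y = (rot ^^ (j mod 2)) y"
    using inj_fn[OF permutes_inj[OF rot_permutes]] by (simp add: inj_eq)
  moreover have "j mod 2 = 0 \<or> j mod 2 = 1"
    by auto
  ultimately show False
    using y S0_neq[OF y] S1_neq[OF S0_in[OF y]] by (auto simp: rot_def)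
qed

lemma orbit_rot_S1: "x \<in> X \<Longrightarrow> orbit rot (S1 x) = orbit rot (S0 x)"
  using permutation_orbit_step[OF permutation_rot, of "S0 x"]
  by (simp add: rot_def S0_in S0_S0)

lemma orbit_rot_S0_S1: "x \<in> X \<Longrightarrow> orbit rot (S0 (S1 x)) = orbit rot x"
  using permutation_orbit_step[OF permutation_rot, of "S0 (S1 x)"]
  by (simp add: rot_def S0_in S1_in S0_S0 S1_S1)

lemma Min_orbit_rot_S0_neq:
  assumes "x \<in> X"
  shows "Min (orbit rot (S0 x)) \<noteq> Min (orbit rot x)"
proof
  have Min_in_orbit: "Min (orbit rot y) \<in> orbit rot y" for y
    using finite_orbit[OF permutation_self_in_orbit[OF permutation_rot]] orbit_nonempty
    by (rule Min_in)
  assume "Min (orbit rot (S0 x)) = Min (orbit rot x)"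
  then have "orbit rot (S0 x) = orbit rot x"
    using Min_in_orbit[of "S0 x"] Min_in_orbit[of x]
    by (intro orbit_eq_if_common_element[OF permutation_rot, of "Min (orbit rot x)"]) simp_all
  then show False
    using S0_notin_orbit_rot[OF assms] permutation_self_in_orbit[OF permutation_rot, of "S0 x"]
    by simp
qed

text \<open>The orbits of \<open>x\<close> and \<open>S0 x\<close> are distinct and both \<open>S0\<close> and \<open>S1\<close> swap them, so
  comparing their minima gives a proper colouring.\<close>

definition colour :: "nat \<Rightarrow> bool" where
  "colour x \<longleftrightarrow> Min (orbit rot x) < Min (orbit rot (S0 x))"

lemma colour_S0:
  assumes "x \<in> X"
  shows "colour (S0 x) \<longleftrightarrow> \<not> colour x"
  using Min_orbit_rot_S0_neq[OF assms] unfolding colour_def by (auto simp: S0_S0 assms)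

lemma colour_S1:
  assumes "x \<in> X"
  shows "colour (S1 x) \<longleftrightarrow> \<not> colour x"
proof -
  have "colour (S1 x) \<longleftrightarrow> colour (S0 x)"
    unfolding colour_def by (simp add: orbit_rot_S1 orbit_rot_S0_S1 S0_S0 assms)
  with colour_S0[OF assms] show ?thesis
    by simp
qed

definition edges :: "(nat \<times> nat) set" where
  "edges = {(l, S0 l) | l. l \<in> X} \<union> {(l, S1 l) | l. l \<in> X}"

lemma S0_edge: "l \<in> X \<Longrightarrow> (l, S0 l) \<in> edges"
  and S1_edge: "l \<in> X \<Longrightarrow> (l, S1 l) \<in> edges"
  unfolding edges_def by blast+

lemma edges_subset: "edges \<subseteq> X \<times> X"
  unfolding edges_def using S0_in S1_in by auto

lemma sym_edges: "sym edges"
  unfolding edges_def sym_def using S0_in S1_in S0_S0 S1_S1 by fastforce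

lemma colour_proper: "\<forall>(x, y)\<in>edges. colour x \<noteq> colour y"
  unfolding edges_def using colour_S0 colour_S1 by auto

lemma loop_adjI:
  assumes "i \<in> X"
  shows "(Inl {i, S0 i}, Inr {i, S1 i}) \<in> loop_adj k S0 S1"
    and "(Inr {i, S1 i}, Inl {i, S0 i}) \<in> loop_adj k S0 S1"
  using assms pair_in_pairs[of i k S0] pair_in_pairs[of i k S1]
  unfolding loop_adj_def X_def by blast+

lemma sym_loop_adj: "sym (loop_adj k S0 S1)"
  unfolding loop_adj_def sym_def by blast

lemma edges_rtrancl_imp_loop_adj_rtrancl:
  "(x, y) \<in> edges\<^sup>* \<Longrightarrow> (Inl {x, S0 x}, Inl {y, S0 y}) \<in> (loop_adj k S0 S1)\<^sup>*"
proof (induction rule: rtrancl_induct)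
  case (step y z)
  from step.hyps(2) consider "y \<in> X" "z = S0 y" | "y \<in> X" "z = S1 y"
    unfolding edges_def by blast
  then have "(Inl {y, S0 y}, Inl {z, S0 z}) \<in> (loop_adj k S0 S1)\<^sup>*"
  proof cases
    case 1
    then show ?thesis
      by (simp add: S0_S0 insert_commute)
  next
    case 2
    then have "{S1 y, S1 (S1 y)} = {y, S1 y}"
      by (auto simp: S1_S1)
    with 2 show ?thesis
      using loop_adjI(1)[of y] loop_adjI(2)[of "S1 y"] S1_in
      by (metis converse_rtrancl_into_rtrancl r_into_rtrancl)
  qed
  with step.IH show ?case
    by (rule rtrancl_trans)
qed simp

lemma loop_adj_rtrancl_imp_edges_rtrancl:
  assumes "(Inl {x, S0 x}, w) \<in> (loop_adj k S0 S1)\<^sup>*" and "x \<in> X"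
  shows "\<forall>i \<in> case_sum id id w. (x, i) \<in> edges\<^sup>*"
  using assms(1)
proof (induction rule: rtrancl_induct)
  case base
  have "(x, S0 x) \<in> edges"
    using S0_edge[OF assms(2)] .
  then show ?case
    by auto
next
  case (step w w')
  from step.hyps(2) obtain p q i where p: "p \<in> pairs k S0" and q: "q \<in> pairs k S1"
    and "i \<in> p" "i \<in> q" and w: "(w = Inl p \<and> w' = Inr q) \<or> (w = Inr q \<and> w' = Inl p)"
    unfolding loop_adj_def by blast
  then have i: "i \<in> X" "p = {i, S0 i}" "q = {i, S1 i}"
    using mem_pairsD[OF S0 p] mem_pairsD[OF S1 q] unfolding X_def by auto
  have "(x, i) \<in> edges\<^sup>*"
    using step.IH w \<open>i \<in> p\<close> \<open>i \<in> q\<close> by auto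
  moreover have "(i, S0 i) \<in> edges" "(i, S1 i) \<in> edges"
    using S0_edge[OF i(1)] S1_edge[OF i(1)] .
  ultimately show ?case
    using w i by (auto intro: rtrancl_into_rtrancl)
qed

lemma num_loops_eq_card_components: "num_loops k S0 S1 = card (X // Restr (edges\<^sup>*) X)"
proof -
  define V where "V = loop_vertices k S0 S1"
  define R where "R = Restr ((loop_adj k S0 S1)\<^sup>*) V"
  define E where "E = Restr (edges\<^sup>*) X"
  define f where "f x = R `` {Inl {x, S0 x}}" for x
  define g where "g x = E `` {x}" for x
  have R: "equiv V R"
    unfolding R_def using sym_loop_adj by (rule equiv_Restr_rtrancl)
  have E: "equiv X E"
    unfolding E_def using sym_edges by (rule equiv_Restr_rtrancl)
  have V: "Inl {x, S0 x} \<in> V" if "x \<in> X" for x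
    using that pair_in_pairs unfolding V_def loop_vertices_def X_def by blast
  have "V // R = f ` X"
  proof
    show "f ` X \<subseteq> V // R"
      unfolding f_def using V by (auto intro: quotientI)
  next
    show "V // R \<subseteq> f ` X"
    proof
      fix C assume "C \<in> V // R"
      then obtain v where v: "v \<in> V" "C = R `` {v}"
        by (rule quotientE)
      then obtain i where i: "i \<in> X" "v = Inl {i, S0 i} \<or> v = Inr {i, S1 i}"
        unfolding V_def loop_vertices_def pairs_def X_def by blast
      then have "(Inl {i, S0 i}, v) \<in> R"
        using loop_adjI(1)[of i] V v unfolding R_def by auto
      then show "C \<in> f ` X"
        using equiv_class_eq[OF R] v i unfolding f_def by auto
    qed
  qed
  moreover have "X // E = g ` X"
    unfolding quotient_def g_def by blast
  moreover have "f x = f y \<longleftrightarrow> g x = g y" if "x \<in> X" "y \<in> X" for x y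
  proof -
    have "f x = f y \<longleftrightarrow> (Inl {x, S0 x}, Inl {y, S0 y}) \<in> R"
      unfolding f_def using eq_equiv_class_iff[OF R V V] that .
    also have "\<dots> \<longleftrightarrow> (x, y) \<in> E"
      using loop_adj_rtrancl_imp_edges_rtrancl[OF _ \<open>x \<in> X\<close>, of "Inl {y, S0 y}"]
        edges_rtrancl_imp_loop_adj_rtrancl[of x y] V that
      unfolding R_def E_def by auto
    also have "\<dots> \<longleftrightarrow> g x = g y"
      unfolding g_def using eq_equiv_class_iff[OF E that] by simp
    finally show ?thesis .
  qed
  ultimately show ?thesis
    unfolding num_loops_def using card_image_eq_if_same_kernel[of X f g]
    by (simp add: V_def R_def E_def)
qed

lemma double_diagram_conditions_iff:
  fixes g :: "nat \<Rightarrow> nat \<times> nat" and b :: "nat \<Rightarrow> bool"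
  assumes S2: "pair_partition k S2"
  defines "f \<equiv> \<lambda>l\<in>X. join_box (g l, b l)"
  shows "(\<forall>l\<in>X. neighbors (f l) (f (S0 l)) \<and> snd (f l) = snd (f (S0 (S1 l)))
                   \<and> fst (f l) = fst (f (S2 l)))
     \<longleftrightarrow> (\<forall>l\<in>X. g l = g (S0 l) \<and> snd (g l) = snd (g (S1 l)) \<and> fst (g l) = fst (g (S2 l)))
         \<and> (\<forall>(x, y)\<in>edges. b x \<noteq> b y)"
proof -
  have S2_in: "l \<in> X \<Longrightarrow> S2 l \<in> X" for l
    using pair_partitionD(1)[OF S2] unfolding X_def .
  have "(\<forall>l\<in>X. neighbors (f l) (f (S0 l)) \<and> snd (f l) = snd (f (S0 (S1 l)))
                   \<and> fst (f l) = fst (f (S2 l)))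
     \<longleftrightarrow> (\<forall>l\<in>X. g l = g (S0 l) \<and> b l \<noteq> b (S0 l) \<and> snd (g l) = snd (g (S0 (S1 l)))
                   \<and> b l = b (S0 (S1 l)) \<and> fst (g l) = fst (g (S2 l)))"
    unfolding f_def by (auto simp: S0_in S1_in S2_in neighbors_join_box snd_join_box_eq_iff)
  also have "\<dots> \<longleftrightarrow> (\<forall>l\<in>X. g l = g (S0 l) \<and> snd (g l) = snd (g (S1 l)) \<and> fst (g l) = fst (g (S2 l)))
         \<and> (\<forall>(x, y)\<in>edges. b x \<noteq> b y)" (is "?U \<longleftrightarrow> ?N1 \<and> ?proper")
  proof
    assume U: ?U
    have "?N1"
    proof (intro ballI conjI)
      fix l assume l: "l \<in> X"
      show "g l = g (S0 l)" and "fst (g l) = fst (g (S2 l))"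
        using U l by blast+
      show "snd (g l) = snd (g (S1 l))"
        using U l S1_in[OF l] by metis
    qed
    moreover have "b x \<noteq> b y" if "(x, y) \<in> edges" for x y
    proof -
      from that consider "x \<in> X" "y = S0 x" | "x \<in> X" "y = S1 x"
        unfolding edges_def by blast
      then show ?thesis
      proof cases
        case 2
        then have "b x = b (S0 y)" and "b y \<noteq> b (S0 y)"
          using U S1_in by blast+
        then show ?thesis
          by argo
      qed (use U in blast)
    qed
    ultimately show "?N1 \<and> ?proper"
      by blast
  next
    assume N1_proper: "?N1 \<and> ?proper"
    show ?U
    proof (intro ballI conjI)
      fix l assume l: "l \<in> X"
      show "g l = g (S0 l)" and "fst (g l) = fst (g (S2 l))"
        using N1_proper l by blast+
      show "b l \<noteq> b (S0 l)"
        using N1_proper S0_edge[OF l] by blast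
      show "snd (g l) = snd (g (S0 (S1 l)))"
        using N1_proper l S1_in[OF l] by metis
      have "b l \<noteq> b (S1 l)" and "b (S1 l) \<noteq> b (S0 (S1 l))"
        using N1_proper S0_edge S1_edge S1_in[OF l] l by blast+
      then show "b l = b (S0 (S1 l))"
        by argo
    qed
  qed
  finally show ?thesis .
qed

end

theorem lemma3p2:
  fixes k :: nat and S0 S1 S2 :: "nat \<Rightarrow> nat"
  assumes "pair_partition k S0" and "pair_partition k S1" and "pair_partition k S2"
  shows "\<forall>lam. young lam \<longrightarrow> N2 k S0 S1 S2 lam = 2 ^ num_loops k S0 S1 * N1 k S0 S1 S2 lam"
proof (intro allI impI)
  fix lam :: "nat list"
  interpret pair_partitions k S0 S1
    using assms(1,2) by unfold_locales
  have "N2 k S0 S1 S2 lam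
          = N1 k S0 S1 S2 lam * card {b \<in> X \<rightarrow>\<^sub>E (UNIV :: bool set). \<forall>(x, y)\<in>edges. b x \<noteq> b y}"
    unfolding N1_def N2_def X_def[symmetric]
    by (rule card_PiE_filter_product[OF bij_join_box]) (rule double_diagram_conditions_iff[OF assms(3)])
  also have "card {b \<in> X \<rightarrow>\<^sub>E (UNIV :: bool set). \<forall>(x, y)\<in>edges. b x \<noteq> b y} = 2 ^ num_loops k S0 S1"
    using card_proper_two_colourings[OF finite_X sym_edges edges_subset colour_proper]
    by (simp add: num_loops_eq_card_components)
  finally show "N2 k S0 S1 S2 lam = 2 ^ num_loops k S0 S1 * N1 k S0 S1 S2 lam"
    by simp
qed

end
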